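(* There is a connected graph $F$ with $D_v(F)\le v(F)-3$. Specifically, $D_v(S_{4,4})=5$.
   Context: Graphs are finite simple graphs; $v(F)$ is the number of vertices of $F$. For a graph $F$, $\mathrm{Subgr}(F)$ is the class of all graphs containing a (not necessarily induced) subgraph isomorphic to $F$. We use first-order logic of graphs with relation symbols for adjacency and equality only. $D_v(F)$ is the minimum $d$ such that there exist a first-order sentence $\Phi$ of quantifier depth $d$ and an integer $k$ such that for every connected graph $G$ with at least $k$ vertices, $G\models\Phi$ if and only if $G$ contains a subgraph isomorphic to $F$. The sparkler graph $S_{a,b}$ is obtained from the star $K_{1,a-1}$ and the path $P_b$ on $b$ vertices by adding an edge between an end vertex of $P_b$ and the central vertex of $K_{1,a-1}$ (so $S_{4,4}$ has 8 vertices). *)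

theory Defs
  imports Main
begin

text \<open>Every finite graph is isomorphic to one on natural-number vertices, and all notions
below are isomorphism invariant, so this loses no generality.\<close>

record graph =
  verts :: "nat set"
  adj   :: "nat \<Rightarrow> nat \<Rightarrow> bool"

definition is_graph :: "graph \<Rightarrow> bool" where
  "is_graph G \<longleftrightarrow> finite (verts G)
     \<and> (\<forall>u v. adj G u v \<longrightarrow> u \<in> verts G \<and> v \<in> verts G)
     \<and> (\<forall>u v. adj G u v \<longrightarrow> adj G v u)
     \<and> (\<forall>u. \<not> adj G u u)"

definition connected_graph :: "graph \<Rightarrow> bool" where
  "connected_graph G \<longleftrightarrow> verts G \<noteq> {}
     \<and> (\<forall>u\<in>verts G. \<forall>v\<in>verts G. (adj G)\<^sup>*\<^sup>* u v)"

definition contains_subgraph :: "graph \<Rightarrow> graph \<Rightarrow> bool" where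
  "contains_subgraph G F \<longleftrightarrow> (\<exists>f. inj_on f (verts F) \<and> f ` verts F \<subseteq> verts G
     \<and> (\<forall>u v. adj F u v \<longrightarrow> adj G (f u) (f v)))"

datatype fo = Adj nat nat | Eq nat nat | Neg fo | Conj fo fo | Disj fo fo
  | Ex nat fo | All nat fo

fun qdepth :: "fo \<Rightarrow> nat" where
  "qdepth (Adj x y) = 0"
| "qdepth (Eq x y) = 0"
| "qdepth (Neg \<phi>) = qdepth \<phi>"
| "qdepth (Conj \<phi> \<psi>) = max (qdepth \<phi>) (qdepth \<psi>)"
| "qdepth (Disj \<phi> \<psi>) = max (qdepth \<phi>) (qdepth \<psi>)"
| "qdepth (Ex x \<phi>) = Suc (qdepth \<phi>)"
| "qdepth (All x \<phi>) = Suc (qdepth \<phi>)"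

fun freevars :: "fo \<Rightarrow> nat set" where
  "freevars (Adj x y) = {x, y}"
| "freevars (Eq x y) = {x, y}"
| "freevars (Neg \<phi>) = freevars \<phi>"
| "freevars (Conj \<phi> \<psi>) = freevars \<phi> \<union> freevars \<psi>"
| "freevars (Disj \<phi> \<psi>) = freevars \<phi> \<union> freevars \<psi>"
| "freevars (Ex x \<phi>) = freevars \<phi> - {x}"
| "freevars (All x \<phi>) = freevars \<phi> - {x}"

definition sentence :: "fo \<Rightarrow> bool" where
  "sentence \<phi> \<longleftrightarrow> freevars \<phi> = {}"

fun sat :: "graph \<Rightarrow> (nat \<Rightarrow> nat) \<Rightarrow> fo \<Rightarrow> bool" where
  "sat G \<sigma> (Adj x y) = adj G (\<sigma> x) (\<sigma> y)"
| "sat G \<sigma> (Eq x y) = (\<sigma> x = \<sigma> y)"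
| "sat G \<sigma> (Neg \<phi>) = (\<not> sat G \<sigma> \<phi>)"
| "sat G \<sigma> (Conj \<phi> \<psi>) = (sat G \<sigma> \<phi> \<and> sat G \<sigma> \<psi>)"
| "sat G \<sigma> (Disj \<phi> \<psi>) = (sat G \<sigma> \<phi> \<or> sat G \<sigma> \<psi>)"
| "sat G \<sigma> (Ex x \<phi>) = (\<exists>v\<in>verts G. sat G (\<sigma>(x := v)) \<phi>)"
| "sat G \<sigma> (All x \<phi>) = (\<forall>v\<in>verts G. sat G (\<sigma>(x := v)) \<phi>)"

text \<open>Truth of a sentence (the assignment is irrelevant for sentences).\<close>
definition models :: "graph \<Rightarrow> fo \<Rightarrow> bool" where
  "models G \<Phi> \<longleftrightarrow> sat G (\<lambda>_. 0) \<Phi>"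

definition defines_subgr_at_depth :: "graph \<Rightarrow> nat \<Rightarrow> bool" where
  "defines_subgr_at_depth F d \<longleftrightarrow> (\<exists>\<Phi> k. sentence \<Phi> \<and> qdepth \<Phi> = d \<and>
     (\<forall>G. is_graph G \<and> connected_graph G \<and> card (verts G) \<ge> k \<longrightarrow>
          (models G \<Phi> \<longleftrightarrow> contains_subgraph G F)))"

definition Dv :: "graph \<Rightarrow> nat" where
  "Dv F = (LEAST d. defines_subgr_at_depth F d)"

text \<open>S_{a,b}: star K_{1,a-1} with centre 0 and leaves 1..a-1; path P_b on a..a+b-1;
 plus the edge between the centre 0 and the path end vertex a.\<close>
definition sparkler_edge :: "nat \<Rightarrow> nat \<Rightarrow> nat \<Rightarrow> nat \<Rightarrow> bool" where
  "sparkler_edge a b u v \<longleftrightarrow> (u = 0 \<and> 1 \<le> v \<and> v < a)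
     \<or> (a \<le> u \<and> v = u + 1 \<and> v < a + b)
     \<or> (u = 0 \<and> v = a)"

definition sparkler :: "nat \<Rightarrow> nat \<Rightarrow> graph" where
  "sparkler a b = \<lparr> verts = {0..<a+b},
     adj = (\<lambda>u v. sparkler_edge a b u v \<or> sparkler_edge a b v u) \<rparr>"

end

theory Submission
  imports Defs
begin

(* Lower bound: let H_5 and H_4 be K_5 and K_4 with the same large number of pendant vertices
   attached to one clique vertex, the centre. Both are connected and large, only H_5 contains
   S_{4,4}, yet Duplicator wins the 4-round Ehrenfeucht-Fraisse game on them: she answers with a
   fresh vertex of the same kind (centre, clique vertex, pendant), and when Spoiler takes a fourth
   non-centre clique vertex of K_5 no round is left and the centre is a safe answer.

   Upper bound: a depth-5 sentence asserts adjacent u, p such that p starts a path p a b c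
   avoiding u and u has three further neighbours y1 y2 y3, and moreover u is not adjacent to a
   or p is not adjacent to exactly one of the y_i. Every copy of S_{4,4} yields such a
   configuration. Conversely, in a connected graph with more than 7^3 vertices a configuration
   yields S_{4,4}: either the y_i avoid the path, or one finds paths of length 4 starting at both
   p and a. Then every vertex within distance 3 of u starts such a path; so either some vertex
   is farther from u, and a shortest path to it together with three neighbours of u forms
   S_{4,4}, or the ball of radius 3 is the whole graph, which then has a vertex of degree at
   least 7 starting a path of length 4. *)

lemma is_graph_sym: "is_graph G \<Longrightarrow> adj G u v \<Longrightarrow> adj G v u"
  and is_graph_irrefl: "is_graph G \<Longrightarrow> \<not> adj G v v"
  and is_graph_adj_verts: "is_graph G \<Longrightarrow> adj G u v \<Longrightarrow> u \<in> verts G \<and> v \<in> verts G"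
  unfolding is_graph_def by blast+

lemma finite_neighbours: "is_graph G \<Longrightarrow> finite {w. adj G v w}"
  by (metis (no_types, lifting) finite_subset is_graph_def mem_Collect_eq subsetI)

lemma connected_graphI:
  assumes "is_graph G" "r \<in> verts G" "\<And>v. v \<in> verts G \<Longrightarrow> (adj G)\<^sup>*\<^sup>* v r"
  shows "connected_graph G"
proof -
  have "symp (adj G)\<^sup>*\<^sup>*"
    by (rule symp_rtranclp) (use assms(1) is_graph_sym in \<open>blast intro: sympI\<close>)
  then show ?thesis
    unfolding connected_graph_def using assms by (blast intro: rtranclp_trans dest: sympD)
qed

lemma exists_fresh: "finite A \<Longrightarrow> card A < card B \<Longrightarrow> \<exists>v\<in>B. v \<notin> A"
  by (meson card_mono not_le subsetI)

lemma is_graph_sparkler: "0 < a \<Longrightarrow> 0 < b \<Longrightarrow> is_graph (sparkler a b)"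
  unfolding is_graph_def sparkler_def sparkler_edge_def by auto

lemma verts_sparkler: "verts (sparkler a b) = {0..<a + b}"
  by (simp add: sparkler_def)

lemma card_verts_sparkler: "card (verts (sparkler a b)) = a + b"
  by (simp add: verts_sparkler)

lemma connected_sparkler:
  assumes "0 < a" "0 < b"
  shows "connected_graph (sparkler a b)"
proof (rule connected_graphI[OF is_graph_sparkler[OF assms]])
  show "0 \<in> verts (sparkler a b)" using assms by (simp add: verts_sparkler)
  have "(adj (sparkler a b))\<^sup>*\<^sup>* v 0" if "v < a + b" for v
    using that
  proof (induction v)
    case (Suc v)
    then have "adj (sparkler a b) (Suc v) 0 \<or> (adj (sparkler a b) (Suc v) v \<and> v < a + b)"
      by (auto simp: sparkler_def sparkler_edge_def)
    then show ?case using Suc.IH by (meson converse_rtranclp_into_rtranclp r_into_rtranclp)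
  qed simp
  then show "(adj (sparkler a b))\<^sup>*\<^sup>* v 0" if "v \<in> verts (sparkler a b)" for v
    using that by (simp add: verts_sparkler)
qed

definition sparkler_4_4_edges :: "(nat \<times> nat) set" where
  "sparkler_4_4_edges = {(0,1), (0,2), (0,3), (0,4), (4,5), (5,6), (6,7)}"

lemma adj_sparkler_4_4:
  "adj (sparkler 4 4) u v \<longleftrightarrow> (u, v) \<in> sparkler_4_4_edges \<or> (v, u) \<in> sparkler_4_4_edges"
proof -
  have "sparkler_edge 4 4 u v \<longleftrightarrow> (u, v) \<in> sparkler_4_4_edges" for u v
    unfolding sparkler_edge_def sparkler_4_4_edges_def by (simp, presburger)
  then show ?thesis by (simp add: sparkler_def)
qed

lemma contains_sparkler_4_4_iff:
  assumes G: "is_graph G"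
  shows "contains_subgraph G (sparkler 4 4) \<longleftrightarrow>
    (\<exists>c l1 l2 l3 q1 q2 q3 q4. distinct [c, l1, l2, l3, q1, q2, q3, q4] \<and>
       adj G c l1 \<and> adj G c l2 \<and> adj G c l3 \<and> adj G c q1 \<and> adj G q1 q2 \<and> adj G q2 q3 \<and> adj G q3 q4)"
    (is "_ \<longleftrightarrow> (\<exists>c l1 l2 l3 q1 q2 q3 q4. ?S c l1 l2 l3 q1 q2 q3 q4)")
proof -
  have V: "verts (sparkler 4 4) = {0..<8}" by (simp add: verts_sparkler)
  show ?thesis
  proof
    assume "contains_subgraph G (sparkler 4 4)"
    then obtain f where inj: "inj_on f {0..<8}" and hom: "\<And>u v. adj (sparkler 4 4) u v \<Longrightarrow> adj G (f u) (f v)"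
      unfolding contains_subgraph_def V by blast
    have "inj_on f (set [0, 1, 2, 3, 4, 5, 6, 7])"
      by (rule inj_on_subset[OF inj]) auto
    then have "distinct (map f [0, 1, 2, 3, 4, 5, 6, 7])"
      by (simp only: distinct_map) simp
    moreover have "adj G (f u) (f v)" if "(u, v) \<in> sparkler_4_4_edges" for u v
      using hom that by (simp add: adj_sparkler_4_4)
    ultimately have "?S (f 0) (f 1) (f 2) (f 3) (f 4) (f 5) (f 6) (f 7)"
      by (simp add: sparkler_4_4_edges_def)
    then show "\<exists>c l1 l2 l3 q1 q2 q3 q4. ?S c l1 l2 l3 q1 q2 q3 q4" by blast
  next
    assume "\<exists>c l1 l2 l3 q1 q2 q3 q4. ?S c l1 l2 l3 q1 q2 q3 q4"
    then obtain c l1 l2 l3 q1 q2 q3 q4 where S: "?S c l1 l2 l3 q1 q2 q3 q4" by blast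
    define xs where "xs = [c, l1, l2, l3, q1, q2, q3, q4]"
    have e: "adj G (xs ! u) (xs ! v)" if "(u, v) \<in> sparkler_4_4_edges" for u v
      using that S by (auto simp: sparkler_4_4_edges_def xs_def)
    have "inj_on (nth xs) {0..<8}" using S by (simp add: inj_on_nth xs_def)
    moreover have "nth xs ` {0..<8} \<subseteq> verts G"
      using S is_graph_adj_verts[OF G] by (auto simp: xs_def less_Suc_eq numeral_eq_Suc)
    moreover have "adj G (xs ! u) (xs ! v)" if "adj (sparkler 4 4) u v" for u v
      using that e is_graph_sym[OF G] unfolding adj_sparkler_4_4 by blast
    ultimately show "contains_subgraph G (sparkler 4 4)"
      unfolding contains_subgraph_def V by blast
  qed
qed

lemma sparkler_4_4_subgraphI:
  "is_graph G \<Longrightarrow> distinct [c, l1, l2, l3, q1, q2, q3, q4] \<Longrightarrow>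
   adj G c l1 \<Longrightarrow> adj G c l2 \<Longrightarrow> adj G c l3 \<Longrightarrow> adj G c q1 \<Longrightarrow>
   adj G q1 q2 \<Longrightarrow> adj G q2 q3 \<Longrightarrow> adj G q3 q4 \<Longrightarrow> contains_subgraph G (sparkler 4 4)"
  using contains_sparkler_4_4_iff by blast

section \<open>Depth 4 does not suffice\<close>

lemma sat_eq_if_back_and_forth:
  fixes R :: "nat \<Rightarrow> nat set \<Rightarrow> (nat \<Rightarrow> nat) \<Rightarrow> (nat \<Rightarrow> nat) \<Rightarrow> bool"
  assumes atomic: "\<And>d S s1 s2 x y. R d S s1 s2 \<Longrightarrow> x \<in> S \<Longrightarrow> y \<in> S \<Longrightarrow>
        (s1 x = s1 y \<longleftrightarrow> s2 x = s2 y) \<and> (adj G1 (s1 x) (s1 y) \<longleftrightarrow> adj G2 (s2 x) (s2 y))"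
    and mono: "\<And>d S s1 s2 d' S'. R d S s1 s2 \<Longrightarrow> d' \<le> d \<Longrightarrow> S' \<subseteq> S \<Longrightarrow> R d' S' s1 s2"
    and forth: "\<And>d S s1 s2 x v1. R (Suc d) S s1 s2 \<Longrightarrow> x \<notin> S \<Longrightarrow> v1 \<in> verts G1 \<Longrightarrow>
        \<exists>v2\<in>verts G2. R d (insert x S) (s1(x := v1)) (s2(x := v2))"
    and backward: "\<And>d S s1 s2 x v2. R (Suc d) S s1 s2 \<Longrightarrow> x \<notin> S \<Longrightarrow> v2 \<in> verts G2 \<Longrightarrow>
        \<exists>v1\<in>verts G1. R d (insert x S) (s1(x := v1)) (s2(x := v2))"
  shows "R (qdepth \<phi>) (freevars \<phi>) s1 s2 \<Longrightarrow> sat G1 s1 \<phi> \<longleftrightarrow> sat G2 s2 \<phi>"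
proof (induction \<phi> arbitrary: s1 s2)
  case (Conj \<phi> \<psi>)
  have "R (qdepth \<phi>) (freevars \<phi>) s1 s2" "R (qdepth \<psi>) (freevars \<psi>) s1 s2"
    using Conj.prems by (auto elim: mono)
  then show ?case using Conj.IH by simp
next
  case (Disj \<phi> \<psi>)
  have "R (qdepth \<phi>) (freevars \<phi>) s1 s2" "R (qdepth \<psi>) (freevars \<psi>) s1 s2"
    using Disj.prems by (auto elim: mono)
  then show ?case using Disj.IH by simp
next
  case (Ex x \<psi>)
  have R: "R (Suc (qdepth \<psi>)) (freevars \<psi> - {x}) s1 s2" using Ex.prems by simp
  have IH: "sat G1 (s1(x := v1)) \<psi> \<longleftrightarrow> sat G2 (s2(x := v2)) \<psi>"
    if "R (qdepth \<psi>) (insert x (freevars \<psi> - {x})) (s1(x := v1)) (s2(x := v2))" for v1 v2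
    using Ex.IH mono[OF that order_refl] by blast
  show ?case using forth[OF R, of x] backward[OF R, of x] IH by (simp, meson)
next
  case (All x \<psi>)
  have R: "R (Suc (qdepth \<psi>)) (freevars \<psi> - {x}) s1 s2" using All.prems by simp
  have IH: "sat G1 (s1(x := v1)) \<psi> \<longleftrightarrow> sat G2 (s2(x := v2)) \<psi>"
    if "R (qdepth \<psi>) (insert x (freevars \<psi> - {x})) (s1(x := v1)) (s2(x := v2))" for v1 v2
    using All.IH mono[OF that order_refl] by blast
  show ?case using forth[OF R, of x] backward[OF R, of x] IH by (simp, meson)
qed (use atomic in auto)

definition clique_with_pendants :: "nat \<Rightarrow> nat \<Rightarrow> graph" where
  "clique_with_pendants k N = \<lparr>verts = {0..<k + N},
     adj = (\<lambda>u v. u \<noteq> v \<and> u < k + N \<and> v < k + N \<and> (u < k \<and> v < k \<or> u = 0 \<or> v = 0))\<rparr>"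

lemma verts_clique_with_pendants [simp]: "verts (clique_with_pendants k N) = {0..<k + N}"
  by (simp add: clique_with_pendants_def)

lemma is_graph_clique_with_pendants: "is_graph (clique_with_pendants k N)"
  unfolding is_graph_def clique_with_pendants_def by auto

lemma connected_clique_with_pendants:
  "0 < k + N \<Longrightarrow> connected_graph (clique_with_pendants k N)"
proof (rule connected_graphI[OF is_graph_clique_with_pendants, of 0])
  fix v assume "v \<in> verts (clique_with_pendants k N)"
  then show "(adj (clique_with_pendants k N))\<^sup>*\<^sup>* v 0"
    by (cases "v = 0") (auto simp: clique_with_pendants_def intro!: r_into_rtranclp)
qed simp

definition vtype :: "nat \<Rightarrow> nat \<Rightarrow> nat" where
  "vtype k v = (if v = 0 then 0 else if v < k then 1 else 2)"

lemma vtype_eq_0_iff: "vtype k v = 0 \<longleftrightarrow> v = 0"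
  by (simp add: vtype_def)

lemma adj_clique_with_pendants_vtype:
  "u \<noteq> v \<Longrightarrow> u < k + N \<Longrightarrow> v < k + N \<Longrightarrow> adj (clique_with_pendants k N) u v \<longleftrightarrow>
     vtype k u = 0 \<or> vtype k v = 0 \<or> vtype k u = 1 \<and> vtype k v = 1"
  by (auto simp: clique_with_pendants_def vtype_def)

(* Duplicator's invariant for the game on clique_with_pendants (Suc k) N versus
   clique_with_pendants k N: the variables in S carry pebbles and d rounds remain, with
   card S + d \<le> k because a play uses at most k pebbles. *)
definition pebbled :: "nat \<Rightarrow> nat \<Rightarrow> nat \<Rightarrow> nat set \<Rightarrow> (nat \<Rightarrow> nat) \<Rightarrow> (nat \<Rightarrow> nat) \<Rightarrow> bool" where
  "pebbled k N d S s1 s2 \<longleftrightarrow> finite S \<and> card S + d \<le> k \<and>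
     (\<forall>x\<in>S. s1 x < Suc k + N \<and> s2 x < k + N) \<and>
     (\<forall>x\<in>S. \<forall>y\<in>S. (s1 x = s1 y \<longleftrightarrow> s2 x = s2 y) \<and>
        (adj (clique_with_pendants (Suc k) N) (s1 x) (s1 y) \<longleftrightarrow> adj (clique_with_pendants k N) (s2 x) (s2 y))) \<and>
     (0 < d \<longrightarrow> (\<forall>x\<in>S. vtype (Suc k) (s1 x) = vtype k (s2 x)))"

lemma pebbled_mono:
  assumes R: "pebbled k N d S s1 s2" and "d' \<le> d" "S' \<subseteq> S"
  shows "pebbled k N d' S' s1 s2"
proof -
  have fin: "finite S" and card: "card S + d \<le> k" using R unfolding pebbled_def by blast+
  have "finite S'" using finite_subset[OF assms(3) fin] .
  moreover have "card S' + d' \<le> k" using card_mono[OF fin assms(3)] assms(2) card by linarith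
  moreover have "0 < d' \<longrightarrow> 0 < d" using assms(2) by simp
  ultimately show ?thesis using R assms(3) unfolding pebbled_def by blast
qed

lemma pebbled_insert:
  assumes R: "pebbled k N (Suc d) S s1 s2" and x: "x \<notin> S" and v: "v1 < Suc k + N" "v2 < k + N"
    and eq: "\<forall>z\<in>S. s1 z = v1 \<longleftrightarrow> s2 z = v2"
    and adj: "\<forall>z\<in>S. adj (clique_with_pendants (Suc k) N) (s1 z) v1 \<longleftrightarrow> adj (clique_with_pendants k N) (s2 z) v2"
    and type: "0 < d \<longrightarrow> vtype (Suc k) v1 = vtype k v2"
  shows "pebbled k N d (insert x S) (s1(x := v1)) (s2(x := v2))"
proof -
  have "adj (clique_with_pendants (Suc k) N) v1 (s1 z) \<longleftrightarrow> adj (clique_with_pendants k N) v2 (s2 z)" if "z \<in> S" for z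
    using adj that is_graph_sym[OF is_graph_clique_with_pendants] by blast
  then show ?thesis
    using R x v eq adj type is_graph_irrefl[OF is_graph_clique_with_pendants] unfolding pebbled_def by auto
qed

lemma zero_pebbled_iff:
  "\<forall>z\<in>S. vtype k (s1 z) = vtype l (s2 z) \<Longrightarrow> 0 \<in> s1 ` S \<longleftrightarrow> 0 \<in> s2 ` S"
  by (auto simp: image_iff) (metis vtype_eq_0_iff)+

lemma pebbled_insert_old:
  assumes R: "pebbled k N (Suc d) S s1 s2" and x: "x \<notin> S" and y: "y \<in> S"
  shows "pebbled k N d (insert x S) (s1(x := s1 y)) (s2(x := s2 y))"
  by (rule pebbled_insert[OF R x]) (use R y in \<open>auto simp: pebbled_def\<close>)

lemma pebbled_insert_fresh:
  assumes R: "pebbled k N (Suc d) S s1 s2" and x: "x \<notin> S" and v: "v1 < Suc k + N" "v2 < k + N"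
    and fresh: "v1 \<notin> s1 ` S" "v2 \<notin> s2 ` S" and type: "vtype (Suc k) v1 = vtype k v2"
  shows "pebbled k N d (insert x S) (s1(x := v1)) (s2(x := v2))"
proof (rule pebbled_insert[OF R x v])
  have "\<forall>z\<in>S. s1 z \<noteq> v1 \<and> s2 z \<noteq> v2 \<and> s1 z < Suc k + N \<and> s2 z < k + N \<and>
      vtype (Suc k) (s1 z) = vtype k (s2 z)"
    using R fresh unfolding pebbled_def by auto
  then show "\<forall>z\<in>S. adj (clique_with_pendants (Suc k) N) (s1 z) v1 \<longleftrightarrow> adj (clique_with_pendants k N) (s2 z) v2"
    using type v by (simp add: adj_clique_with_pendants_vtype)
qed (use fresh type in auto)

lemma pebbled_forth:
  assumes N: "k \<le> N" and R: "pebbled k N (Suc d) S s1 s2" and x: "x \<notin> S"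
    and "v1 \<in> verts (clique_with_pendants (Suc k) N)"
  shows "\<exists>v2\<in>verts (clique_with_pendants k N). pebbled k N d (insert x S) (s1(x := v1)) (s2(x := v2))"
proof -
  have v1: "v1 < Suc k + N" using assms(4) by simp
  have fin: "finite S" and card: "card S + Suc d \<le> k" and range: "\<forall>z\<in>S. s2 z < k + N"
    and types: "\<forall>z\<in>S. vtype (Suc k) (s1 z) = vtype k (s2 z)"
    using R unfolding pebbled_def by auto
  have small: "card (s2 ` S) \<le> card S" using card_image_le[OF fin] .
  show ?thesis
  proof (cases "v1 \<in> s1 ` S")
    case True
    then obtain y where "y \<in> S" "v1 = s1 y" by blast
    then show ?thesis using pebbled_insert_old[OF R x \<open>y \<in> S\<close>] range by auto
  next
    case fresh1: False
    note ext = pebbled_insert_fresh[OF R x v1 _ fresh1]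
    consider "v1 = 0" | "0 < v1" "v1 < Suc k" | "Suc k \<le> v1" by linarith
    then show ?thesis
    proof cases
      case 1
      have "0 \<notin> s2 ` S" using zero_pebbled_iff[OF types] fresh1 1 by blast
      then show ?thesis using ext[of 0] 1 card by (auto simp: vtype_def)
    next
      case 3
      obtain v2 where "v2 \<in> {k..<k + N}" "v2 \<notin> s2 ` S"
        using exists_fresh[of "s2 ` S" "{k..<k + N}"] small card N fin by auto
      then show ?thesis using ext[of v2] 3 card by (auto simp: vtype_def)
    next
      case 2
      show ?thesis
      proof (cases "{1..<k} \<subseteq> s2 ` S")
        case False
        then obtain v2 where "v2 \<in> {1..<k}" "v2 \<notin> s2 ` S" by blast
        then show ?thesis using ext[of v2] 2 by (auto simp: vtype_def)
      next
        case True
        (* Every clique vertex of the smaller graph except the centre is taken. This can only happen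
           in the last round, where answering with the unused centre is safe. *)
        have "k - 1 \<le> card (s2 ` S)" using card_mono[OF finite_imageI[OF fin] True] by simp
        then have d: "d = 0" and "card (s2 ` S) = card {1..<k}" using small card by auto
        then have clique: "s2 ` S = {1..<k}" using card_subset_eq[OF finite_imageI[OF fin] True] by simp
        have s2: "\<forall>z\<in>S. 0 < s2 z \<and> s2 z < k"
          using clique by (metis atLeastLessThan_iff image_eqI less_eq_Suc_le One_nat_def)
        have "pebbled k N d (insert x S) (s1(x := v1)) (s2(x := 0))"
        proof (rule pebbled_insert[OF R x v1])
          have "\<forall>z\<in>S. vtype (Suc k) (s1 z) = 1" using s2 types by (simp add: vtype_def)
          then have "\<forall>z\<in>S. 0 < s1 z \<and> s1 z < Suc k" by (auto simp: vtype_def split: if_splits)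
          moreover have "\<forall>z\<in>S. s1 z \<noteq> v1" using fresh1 by auto
          ultimately show "\<forall>z\<in>S. adj (clique_with_pendants (Suc k) N) (s1 z) v1 \<longleftrightarrow> adj (clique_with_pendants k N) (s2 z) 0"
            using 2 v1 s2 by (auto simp: clique_with_pendants_def)
        qed (use card s2 fresh1 d in auto)
        then show ?thesis using card by auto
      qed
    qed
  qed
qed

lemma pebbled_back:
  assumes N: "k \<le> N" and R: "pebbled k N (Suc d) S s1 s2" and x: "x \<notin> S"
    and "v2 \<in> verts (clique_with_pendants k N)"
  shows "\<exists>v1\<in>verts (clique_with_pendants (Suc k) N). pebbled k N d (insert x S) (s1(x := v1)) (s2(x := v2))"
proof -
  have v2: "v2 < k + N" using assms(4) by simp
  have fin: "finite S" and card: "card S + Suc d \<le> k" and range: "\<forall>z\<in>S. s1 z < Suc k + N"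
    and types: "\<forall>z\<in>S. vtype (Suc k) (s1 z) = vtype k (s2 z)"
    using R unfolding pebbled_def by auto
  have small: "card (s1 ` S) \<le> card S" using card_image_le[OF fin] .
  show ?thesis
  proof (cases "v2 \<in> s2 ` S")
    case True
    then obtain y where "y \<in> S" "v2 = s2 y" by blast
    then show ?thesis using pebbled_insert_old[OF R x \<open>y \<in> S\<close>] range by auto
  next
    case fresh2: False
    note ext = pebbled_insert_fresh[OF R x _ v2 _ fresh2]
    consider "v2 = 0" | "0 < v2" "v2 < k" | "k \<le> v2" by linarith
    then show ?thesis
    proof cases
      case 1
      have "0 \<notin> s1 ` S" using zero_pebbled_iff[OF types] fresh2 1 by blast
      then show ?thesis using ext[of 0] 1 by (auto simp: vtype_def)
    next
      case 2
      obtain v1 where "v1 \<in> {1..<Suc k}" "v1 \<notin> s1 ` S"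
        using exists_fresh[of "s1 ` S" "{1..<Suc k}"] small card fin by auto
      then show ?thesis using ext[of v1] 2 by (auto simp: vtype_def)
    next
      case 3
      obtain v1 where "v1 \<in> {Suc k..<Suc k + N}" "v1 \<notin> s1 ` S"
        using exists_fresh[of "s1 ` S" "{Suc k..<Suc k + N}"] small card N fin by auto
      then show ?thesis using ext[of v1] 3 card by (auto simp: vtype_def)
    qed
  qed
qed

lemma models_clique_with_pendants_Suc_eq:
  assumes "k \<le> N" "sentence \<Phi>" "qdepth \<Phi> \<le> k"
  shows "models (clique_with_pendants (Suc k) N) \<Phi> \<longleftrightarrow> models (clique_with_pendants k N) \<Phi>"
  unfolding models_def
proof (rule sat_eq_if_back_and_forth[where R = "pebbled k N"])
  show "pebbled k N (qdepth \<Phi>) (freevars \<Phi>) (\<lambda>_. 0) (\<lambda>_. 0)"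
    using assms(2,3) by (simp add: pebbled_def sentence_def)
next
  fix d S s1 s2 x y
  assume "pebbled k N d S s1 s2" "x \<in> S" "y \<in> S"
  then show "(s1 x = s1 y \<longleftrightarrow> s2 x = s2 y) \<and>
      (adj (clique_with_pendants (Suc k) N) (s1 x) (s1 y) \<longleftrightarrow> adj (clique_with_pendants k N) (s2 x) (s2 y))"
    unfolding pebbled_def by blast
qed (fact pebbled_mono, fact pebbled_forth[OF assms(1)], fact pebbled_back[OF assms(1)])

lemma sparkler_4_4_in_clique_with_pendants_5:
  "3 \<le> N \<Longrightarrow> contains_subgraph (clique_with_pendants 5 N) (sparkler 4 4)"
  by (rule sparkler_4_4_subgraphI[OF is_graph_clique_with_pendants, of 0 5 6 7 1 2 3 4])
    (auto simp: clique_with_pendants_def)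

lemma sparkler_4_4_not_in_clique_with_pendants_4:
  "\<not> contains_subgraph (clique_with_pendants 4 N) (sparkler 4 4)"
proof
  let ?G = "clique_with_pendants 4 N"
  have clique_nbrs: "v \<in> {0, 1, 2, 3} - {u}" if "adj ?G u v" "0 < u" "u < 4" for u v
    using that by (auto simp: clique_with_pendants_def)
  have pendant_nbrs: "v = 0" if "adj ?G u v" "4 \<le> u" for u v
    using that by (auto simp: clique_with_pendants_def)
  have inner: "u \<in> {1, 2, 3} \<and> v \<in> {1, 2, 3}" if "adj ?G u v" "u \<noteq> 0" "v \<noteq> 0" for u v
    using that unfolding clique_with_pendants_def by (simp, presburger)
  have few: "length xs \<le> 3" if "distinct xs" "set xs \<subseteq> {0, 1, 2, 3} - {u}" "u \<in> {0, 1, 2, 3}"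
    for xs :: "nat list" and u
  proof -
    have "card ({0, 1, 2, 3} - {u}) \<le> 3" using that(3) by auto
    then show ?thesis using card_mono[OF _ that(2)] distinct_card[OF that(1)] by simp
  qed
  assume "contains_subgraph ?G (sparkler 4 4)"
  then obtain c l1 l2 l3 q1 q2 q3 q4 where d: "distinct [c, l1, l2, l3, q1, q2, q3, q4]"
    and e: "adj ?G c l1" "adj ?G c l2" "adj ?G c l3" "adj ?G c q1" "adj ?G q1 q2" "adj ?G q2 q3" "adj ?G q3 q4"
    unfolding contains_sparkler_4_4_iff[OF is_graph_clique_with_pendants] by blast
  consider "c = 0" | "0 < c" "c < 4" | "4 \<le> c" by linarith
  then show False
  proof cases
    case 1
    then have "set [q1, q2, q3, q4] \<subseteq> {0, 1, 2, 3} - {0}"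
      using d inner[OF e(5)] inner[OF e(6)] inner[OF e(7)] by auto
    then show False using few[of "[q1, q2, q3, q4]" 0] d by simp
  next
    case 2
    then have "set [l1, l2, l3, q1] \<subseteq> {0, 1, 2, 3} - {c}"
      using clique_nbrs e(1-4) by auto
    moreover have "c \<in> {0, 1, 2, 3}" using 2 by auto
    ultimately show False using few[of "[l1, l2, l3, q1]" c] d by simp
  next
    case 3
    then show False using pendant_nbrs[OF e(1)] pendant_nbrs[OF e(2)] d by simp
  qed
qed

lemma not_defines_sparkler_4_4_below_5:
  assumes "d \<le> 4"
  shows "\<not> defines_subgr_at_depth (sparkler 4 4) d"
proof
  assume "defines_subgr_at_depth (sparkler 4 4) d"
  then obtain \<Phi> k where \<Phi>: "sentence \<Phi>" "qdepth \<Phi> = d"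
    and defining: "\<And>G. is_graph G \<Longrightarrow> connected_graph G \<Longrightarrow> k \<le> card (verts G) \<Longrightarrow>
        models G \<Phi> \<longleftrightarrow> contains_subgraph G (sparkler 4 4)"
    unfolding defines_subgr_at_depth_def by blast
  let ?G = "\<lambda>m. clique_with_pendants m (k + 4)"
  have "models (?G m) \<Phi> \<longleftrightarrow> contains_subgraph (?G m) (sparkler 4 4)" for m
    by (rule defining) (simp_all add: is_graph_clique_with_pendants connected_clique_with_pendants)
  moreover have "models (?G (Suc 4)) \<Phi> \<longleftrightarrow> models (?G 4) \<Phi>"
    by (rule models_clique_with_pendants_Suc_eq) (use \<Phi> assms in auto)
  ultimately show False
    using sparkler_4_4_in_clique_with_pendants_5 sparkler_4_4_not_in_clique_with_pendants_4 by simp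
qed

fun dist_le :: "graph \<Rightarrow> nat \<Rightarrow> nat \<Rightarrow> nat \<Rightarrow> bool" where
  "dist_le G 0 u x \<longleftrightarrow> x = u"
| "dist_le G (Suc k) u x \<longleftrightarrow> dist_le G k u x \<or> (\<exists>y. dist_le G k u y \<and> adj G y x)"

lemma dist_le_mono: "dist_le G k u x \<Longrightarrow> k \<le> m \<Longrightarrow> dist_le G m u x"
  by (induction m) (auto simp: le_Suc_eq)

lemma dist_le_verts: "is_graph G \<Longrightarrow> u \<in> verts G \<Longrightarrow> dist_le G k u x \<Longrightarrow> x \<in> verts G"
  by (induction k arbitrary: x) (auto dest: is_graph_adj_verts)

lemma dist_le_3_cases:
  "dist_le G 3 u x \<Longrightarrow> x = u \<or> adj G u x \<or> (\<exists>w. adj G u w \<and> adj G w x) \<or>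
     (\<exists>w1 w2. adj G u w1 \<and> adj G w1 w2 \<and> adj G w2 x)"
  by (auto simp: numeral_eq_Suc)

lemma sphere_predecessor:
  "dist_le G k u v \<Longrightarrow> \<not> dist_le G j u v \<Longrightarrow> k = Suc j \<Longrightarrow> j = Suc i \<Longrightarrow>
     \<exists>y. dist_le G j u y \<and> \<not> dist_le G i u y \<and> adj G y v"
  by auto

lemma reachable_dist_le_or_sphere:
  assumes "(adj G)\<^sup>*\<^sup>* u x"
  shows "dist_le G k u x \<or> (\<exists>v. dist_le G (Suc k) u v \<and> \<not> dist_le G k u v)"
  using assms
proof (induction rule: rtranclp_induct)
  case base
  show ?case using dist_le_mono[of G 0 u u k] by simp
next
  case (step y z)
  then show ?case by (cases "dist_le G k u y") auto
qed

lemma card_ball_le: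
  assumes G: "is_graph G" and u: "u \<in> verts G" and deg: "\<forall>v\<in>verts G. card {w. adj G v w} \<le> D"
  shows "card {x. dist_le G k u x} \<le> Suc D ^ k"
proof (induction k)
  case (Suc k)
  let ?B = "{x. dist_le G k u x}"
  have B: "?B \<subseteq> verts G" using dist_le_verts[OF G u] by blast
  then have fin: "finite ?B" using G finite_subset unfolding is_graph_def by blast
  have "card {x. dist_le G (Suc k) u x} \<le> card ?B + card (\<Union>y\<in>?B. {w. adj G y w})"
    by (rule order_trans[OF _ card_Un_le]) (auto intro!: card_mono simp: fin finite_neighbours[OF G])
  also have "card (\<Union>y\<in>?B. {w. adj G y w}) \<le> (\<Sum>y\<in>?B. card {w. adj G y w})"
    by (rule card_UN_le[OF fin])
  also have "\<dots> \<le> card ?B * D"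
    using sum_bounded_above[of ?B "\<lambda>y. card {w. adj G y w}" D] deg B by auto
  finally have "card {x. dist_le G (Suc k) u x} \<le> card ?B * Suc D" by simp
  then show ?case using Suc.IH by (metis mult_le_mono1 order_trans power_Suc2)
qed simp

lemma high_degree_if_ball_covers:
  assumes G: "is_graph G" and u: "u \<in> verts G" and ball: "\<forall>v\<in>verts G. dist_le G r u v"
    and big: "Suc D ^ r < card (verts G)"
  shows "\<exists>h\<in>verts G. D < card {w. adj G h w}"
proof (rule ccontr)
  assume "\<not> ?thesis"
  then have "card {x. dist_le G r u x} \<le> Suc D ^ r"
    using card_ball_le[OF G u] by (simp add: not_less)
  moreover have "card (verts G) \<le> card {x. dist_le G r u x}"
    using G ball dist_le_verts[OF G u]
    by (intro card_mono) (auto simp: is_graph_def intro: finite_subset)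
  ultimately show False using big by simp
qed

lemma three_distinct_elements:
  assumes "3 \<le> card S"
  obtains a b c where "distinct [a, b, c]" "{a, b, c} \<subseteq> S"
proof -
  obtain T where "T \<subseteq> S" "card T = 3" using obtain_subset_with_card_n[OF assms] by blast
  then show ?thesis using that by (auto simp: card_3_iff)
qed

definition starts_path4 :: "graph \<Rightarrow> nat \<Rightarrow> bool" where
  "starts_path4 G v \<longleftrightarrow> (\<exists>x1 x2 x3 x4. distinct [v, x1, x2, x3, x4] \<and>
     adj G v x1 \<and> adj G x1 x2 \<and> adj G x2 x3 \<and> adj G x3 x4)"

lemma starts_path4I:
  "distinct [v, x1, x2, x3, x4] \<Longrightarrow> adj G v x1 \<Longrightarrow> adj G x1 x2 \<Longrightarrow> adj G x2 x3 \<Longrightarrow> adj G x3 x4 \<Longrightarrow>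
   starts_path4 G v"
  unfolding starts_path4_def by blast

lemma sparkler_4_4_if_high_degree_path:
  assumes G: "is_graph G" and deg: "6 < card {w. adj G h w}" and path: "starts_path4 G h"
  shows "contains_subgraph G (sparkler 4 4)"
proof -
  obtain x1 x2 x3 x4 where x: "distinct [h, x1, x2, x3, x4]"
    "adj G h x1" "adj G x1 x2" "adj G x2 x3" "adj G x3 x4"
    using path unfolding starts_path4_def by blast
  have "card {x1, x2, x3, x4} = 4" using x(1) by simp
  then have "3 \<le> card ({w. adj G h w} - {x1, x2, x3, x4})"
    using diff_card_le_card_Diff[of "{x1, x2, x3, x4}" "{w. adj G h w}"] deg by simp
  then obtain l1 l2 l3 where l: "distinct [l1, l2, l3]" "{l1, l2, l3} \<subseteq> {w. adj G h w} - {x1, x2, x3, x4}"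
    by (rule three_distinct_elements)
  then have "h \<notin> {l1, l2, l3}" using is_graph_irrefl[OF G] by auto
  then show ?thesis using sparkler_4_4_subgraphI[OF G, of h l1 l2 l3 x1 x2 x3 x4] l x by auto
qed

lemma sparkler_4_4_if_far_vertex:
  assumes G: "is_graph G" and conn: "connected_graph G" and u: "u \<in> verts G"
    and leaves: "distinct [y1, y2, y3, y4]" "adj G u y1" "adj G u y2" "adj G u y3" "adj G u y4"
    and far: "x \<in> verts G" "\<not> dist_le G 3 u x"
  shows "contains_subgraph G (sparkler 4 4)"
proof -
  obtain v where v: "dist_le G 4 u v" "\<not> dist_le G 3 u v"
    using reachable_dist_le_or_sphere[of G u x 3] conn u far unfolding connected_graph_def by auto
  have steps: "4 = Suc 3" "3 = Suc 2" "2 = Suc 1" "1 = Suc 0" by simp_all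
  obtain p3 where p3: "dist_le G 3 u p3" "\<not> dist_le G 2 u p3" "adj G p3 v"
    using sphere_predecessor[OF v steps(1,2)] by blast
  obtain p2 where p2: "dist_le G 2 u p2" "\<not> dist_le G 1 u p2" "adj G p2 p3"
    using sphere_predecessor[OF p3(1,2) steps(2,3)] by blast
  obtain p1 where p1: "dist_le G 1 u p1" "p1 \<noteq> u" "adj G p1 p2"
    using sphere_predecessor[OF p2(1,2) steps(3,4)] by auto
  have up1: "adj G u p1" using p1 by simp
  have inner: "dist_le G 1 u u" "dist_le G 2 u u" "dist_le G 3 u u" "dist_le G 2 u p1" "dist_le G 3 u p1"
    "dist_le G 3 u p2"
    using p1(1) p2(1) dist_le_mono[of G 0 u u] dist_le_mono[of G 1 u p1] dist_le_mono[of G 2 u p2] by auto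
  have outer: "\<not> dist_le G 1 u p3" "\<not> dist_le G 1 u v" "\<not> dist_le G 2 u v"
    using p3(2) v(2) dist_le_mono[of G 1 u p3 2] dist_le_mono[of G 1 u v 3] dist_le_mono[of G 2 u v 3]
    by auto
  have path: "distinct [u, p1, p2, p3, v]"
    using inner outer p1 p2 p3 v by auto
  have "card {y1, y2, y3, y4} = 4" using leaves(1) by simp
  then have "3 \<le> card ({y1, y2, y3, y4} - {p1})" by (simp add: card_Diff_singleton_if)
  then obtain l1 l2 l3 where l: "distinct [l1, l2, l3]" "{l1, l2, l3} \<subseteq> {y1, y2, y3, y4} - {p1}"
    by (rule three_distinct_elements)
  then have "adj G u l1" "adj G u l2" "adj G u l3" using leaves by auto
  moreover from this have "u \<notin> {l1, l2, l3}" "{l1, l2, l3} \<inter> {p1, p2, p3, v} = {}"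
    using l(2) outer p2(2) is_graph_irrefl[OF G] by auto
  then have "distinct [u, l1, l2, l3, p1, p2, p3, v]" using l(1) path by auto
  ultimately show ?thesis using sparkler_4_4_subgraphI[OF G] up1 p1(3) p2(3) p3(3) by blast
qed

section \<open>A defining sentence of depth 5\<close>

definition exactly_one :: "bool \<Rightarrow> bool \<Rightarrow> bool \<Rightarrow> bool" where
  "exactly_one P Q R \<longleftrightarrow> P \<and> \<not> Q \<and> \<not> R \<or> \<not> P \<and> Q \<and> \<not> R \<or> \<not> P \<and> \<not> Q \<and> R"

locale almost_sparkler =
  fixes G u p a b c y1 y2 y3
  assumes graph: "is_graph G"
    and path: "adj G u p" "adj G p a" "adj G a b" "adj G b c" "distinct [u, p, a, b, c]"
    and leaves: "distinct [p, y1, y2, y3]" "adj G u y1" "adj G u y2" "adj G u y3"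
begin

lemma sym: "adj G x z \<Longrightarrow> adj G z x"
  by (rule is_graph_sym[OF graph])

lemma irrefl: "\<not> adj G x x"
  by (rule is_graph_irrefl[OF graph])

lemma leaf_avoiding: "\<exists>x. adj G u x \<and> x \<noteq> p \<and> x \<noteq> s \<and> x \<noteq> t"
  using leaves by (metis distinct_length_2_or_more)

lemma starts_path4_if_adj_path:
  assumes h: "h \<notin> {u, p, a, b, c}" and hq: "adj G h q" and q: "q \<in> {u, p, a, b, c}"
  shows "starts_path4 G h"
proof -
  note starts = starts_path4I[of h _ _ _ _ G]
  obtain x where x: "adj G u x" "x \<noteq> p" "x \<noteq> a" "x \<noteq> h" using leaf_avoiding by blast
  have "x \<noteq> u" using x(1) irrefl by auto
  then show ?thesis
    using q starts[of u p a b] starts[of p a b c] starts[of a p u x] starts[of b a p u] starts[of c b a p]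
      hq path x h sym by auto
qed

lemma starts_path4_if_adj2_path:
  assumes h: "h \<notin> {u, p, a, b, c}" and w: "w \<notin> {u, p, a, b, c}" "w \<noteq> h"
    and hw: "adj G h w" and wq: "adj G w q" and q: "q \<in> {u, p, a, b, c}"
  shows "starts_path4 G h"
  using q starts_path4I[of h w u p a] starts_path4I[of h w p a b] starts_path4I[of h w a b c]
    starts_path4I[of h w b a p] starts_path4I[of h w c b a] hw wq path h w sym by auto

lemma sparkler_4_4_if_leaves_off_path:
  assumes "{y1, y2, y3} \<inter> {a, b, c} = {}"
  shows "contains_subgraph G (sparkler 4 4)"
proof -
  have "y1 \<noteq> u" "y2 \<noteq> u" "y3 \<noteq> u" using leaves irrefl by auto
  then show ?thesis using sparkler_4_4_subgraphI[OF graph, of u y1 y2 y3 p a b c] leaves path assms by auto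
qed

lemma starts_path4_near:
  assumes pp: "starts_path4 G p" and pa: "starts_path4 G a" and h: "dist_le G 3 u h"
  shows "starts_path4 G h"
proof (cases "h \<in> {u, p, a, b, c}")
  case True
  obtain x where x: "adj G u x" "x \<noteq> p" "x \<noteq> a" "x \<noteq> b" using leaf_avoiding by blast
  have "x \<noteq> u" using x(1) irrefl by auto
  then show ?thesis
    using True pp pa starts_path4I[of u p a b c] starts_path4I[of b a p u x] starts_path4I[of c b a p u]
      path x sym by auto
next
  case out: False
  note adj1 = starts_path4_if_adj_path[OF out] and adj2 = starts_path4_if_adj2_path[OF out]
  consider "h = u" | "adj G u h" | w where "adj G u w" "adj G w h"
    | w1 w2 where "adj G u w1" "adj G w1 w2" "adj G w2 h"
    using dist_le_3_cases[OF h] by blast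
  then show ?thesis
  proof cases
    case 1
    with out show ?thesis by simp
  next
    case 2
    then show ?thesis using adj1[of u] sym by auto
  next
    case (3 w)
    then show ?thesis using adj1[of w] adj2[of w u] sym irrefl by (cases "w \<in> {u, p, a, b, c}") auto
  next
    case (4 w1 w2)
    consider "w2 \<in> {u, p, a, b, c}" | "w1 \<in> {u, p, a, b, c}" "w2 \<notin> {u, p, a, b, c}" | "w1 = h"
      | "w1 \<notin> {u, p, a, b, c}" "w2 \<notin> {u, p, a, b, c}" "w1 \<noteq> h" by blast
    then show ?thesis
    proof cases
      case 1
      then show ?thesis using adj1[of w2] 4 sym by auto
    next
      case 2
      then show ?thesis using adj2[of w2 w1] 4 sym irrefl by auto
    next
      case 3
      then show ?thesis using adj1[of u] 4 sym by auto
    next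
      case 5: 4
      moreover have "h \<noteq> w2" "w1 \<noteq> w2" using 4 irrefl by auto
      ultimately show ?thesis using starts_path4I[of h w2 w1 u p G] 4 out path sym by auto
    qed
  qed
qed

end

locale large_almost_sparkler = almost_sparkler +
  assumes connected: "connected_graph G" and large: "7 ^ 3 < card (verts G)"
begin

lemma sparkler_4_4_if_paths_from_p_a:
  assumes "starts_path4 G p" "starts_path4 G a"
  shows "contains_subgraph G (sparkler 4 4)"
proof -
  have u: "u \<in> verts G" using is_graph_adj_verts[OF graph path(1)] by blast
  show ?thesis
  proof (cases "\<forall>x\<in>verts G. dist_le G 3 u x")
    case False
    then show ?thesis
      using sparkler_4_4_if_far_vertex[OF graph connected u, of p y1 y2 y3] leaves path(1) by auto
  next
    case True
    then obtain h where h: "h \<in> verts G" "6 < card {w. adj G h w}"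
      using high_degree_if_ball_covers[OF graph u True, of 6] large by auto
    then have "starts_path4 G h" using starts_path4_near[OF assms] True by blast
    then show ?thesis using sparkler_4_4_if_high_degree_path[OF graph h(2)] by blast
  qed
qed

lemma sparkler_4_4_if_adj_u_b_or_c:
  assumes "adj G u b \<or> adj G u c"
  shows "contains_subgraph G (sparkler 4 4)"
proof (cases "adj G u c")
  case True
  have "starts_path4 G p" using starts_path4I[of p a b c u G] path sym True by auto
  moreover have "starts_path4 G a" using starts_path4I[of a p u c b G] path sym True by auto
  ultimately show ?thesis by (rule sparkler_4_4_if_paths_from_p_a)
next
  case False
  then have ub: "adj G u b" using assms by simp
  obtain x where x: "adj G u x" "x \<noteq> p" "x \<noteq> a" "x \<noteq> b" using leaf_avoiding by blast
  have "x \<noteq> u" using x(1) irrefl by auto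
  then have "starts_path4 G p" using starts_path4I[of p a b u x G] path sym ub x by auto
  moreover have "starts_path4 G a" using starts_path4I[of a p u b c G] path sym ub by auto
  ultimately show ?thesis by (rule sparkler_4_4_if_paths_from_p_a)
qed

lemma sparkler_4_4_if_common_neighbour:
  assumes ua: "adj G u a" and x: "adj G u x" "adj G p x" "x \<notin> {p, a, b, c}"
    and x2: "adj G u x2" "x2 \<notin> {p, a, x}"
  shows "contains_subgraph G (sparkler 4 4)"
proof -
  have "x \<noteq> u" "x2 \<noteq> u" using x x2 irrefl by auto
  then have "starts_path4 G p" "starts_path4 G a"
    using starts_path4I[of p x u a b G] starts_path4I[of a p x u x2 G] path sym ua x x2 by auto
  then show ?thesis by (rule sparkler_4_4_if_paths_from_p_a)
qed

lemma sparkler_4_4: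
  assumes "\<not> adj G u a \<or> \<not> exactly_one (adj G p y1) (adj G p y2) (adj G p y3)"
  shows "contains_subgraph G (sparkler 4 4)"
proof -
  consider "adj G u b \<or> adj G u c" | "{y1, y2, y3} \<inter> {a, b, c} = {}"
    | "a \<in> {y1, y2, y3}" "\<not> adj G u b" "\<not> adj G u c"
    using leaves by auto
  then show ?thesis
  proof cases
    case 3
    then have "adj G u a" using leaves by auto
    then have "\<not> exactly_one (adj G p y1) (adj G p y2) (adj G p y3)" using assms by simp
    then obtain x where x: "x \<in> {y1, y2, y3}" "x \<noteq> a" "adj G p x"
      using 3 path(2) leaves(1) unfolding exactly_one_def by auto
    obtain x2 where x2: "x2 \<in> {y1, y2, y3}" "x2 \<notin> {a, x}"
      using leaves(1) by (metis distinct_length_2_or_more insertCI insertE singletonD)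
    have "x \<notin> {b, c}" using x(1) 3 leaves by auto
    then show ?thesis
      using sparkler_4_4_if_common_neighbour[OF \<open>adj G u a\<close>] x x2 leaves by auto
  qed (use sparkler_4_4_if_adj_u_b_or_c sparkler_4_4_if_leaves_off_path in auto)
qed

end

definition Neq :: "nat \<Rightarrow> nat \<Rightarrow> fo" where
  "Neq x y = Neg (Eq x y)"

definition path_from_1 :: "fo \<Rightarrow> fo" where
  "path_from_1 \<phi> = Ex 2 (Conj (Adj 1 2) (Conj (Neq 2 0) (Conj \<phi>
     (Ex 3 (Conj (Adj 2 3) (Conj (Neq 3 1) (Conj (Neq 3 0)
       (Ex 4 (Conj (Adj 3 4) (Conj (Neq 4 2) (Conj (Neq 4 1) (Neq 4 0))))))))))))"

definition leaves_at_0 :: "fo \<Rightarrow> fo" where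
  "leaves_at_0 \<phi> = Ex 2 (Ex 3 (Ex 4 (Conj (Neq 2 3) (Conj (Neq 2 4) (Conj (Neq 3 4)
     (Conj (Adj 0 2) (Conj (Adj 0 3) (Conj (Adj 0 4)
       (Conj (Neq 2 1) (Conj (Neq 3 1) (Conj (Neq 4 1) \<phi>)))))))))))"

definition exactly_one_adj_1 :: fo where
  "exactly_one_adj_1 = Disj (Conj (Adj 1 2) (Conj (Neg (Adj 1 3)) (Neg (Adj 1 4))))
     (Disj (Conj (Neg (Adj 1 2)) (Conj (Adj 1 3) (Neg (Adj 1 4))))
           (Conj (Neg (Adj 1 2)) (Conj (Neg (Adj 1 3)) (Adj 1 4))))"

definition sparkler_4_4_sentence :: fo where
  "sparkler_4_4_sentence = Ex 0 (Ex 1 (Conj (Adj 0 1)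
     (Disj (Conj (path_from_1 (Neg (Adj 0 2))) (leaves_at_0 (Eq 0 0)))
           (Conj (path_from_1 (Eq 0 0)) (leaves_at_0 (Neg exactly_one_adj_1))))))"

lemma sentence_sparkler_4_4_sentence: "sentence sparkler_4_4_sentence"
  by (auto simp: sentence_def sparkler_4_4_sentence_def path_from_1_def leaves_at_0_def
      exactly_one_adj_1_def Neq_def)

lemma qdepth_sparkler_4_4_sentence: "qdepth sparkler_4_4_sentence = 5"
  by (simp add: sparkler_4_4_sentence_def path_from_1_def leaves_at_0_def exactly_one_adj_1_def Neq_def)

lemma sat_path_from_1:
  assumes "is_graph G"
  shows "sat G \<sigma> (path_from_1 \<phi>) \<longleftrightarrow> (\<exists>a b c. adj G (\<sigma> 1) a \<and> adj G a b \<and> adj G b c \<and>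
     a \<noteq> \<sigma> 0 \<and> b \<noteq> \<sigma> 1 \<and> b \<noteq> \<sigma> 0 \<and> c \<noteq> a \<and> c \<noteq> \<sigma> 1 \<and> c \<noteq> \<sigma> 0 \<and> sat G (\<sigma>(2 := a)) \<phi>)"
  unfolding path_from_1_def Neq_def using is_graph_adj_verts[OF assms] by simp blast

lemma sat_leaves_at_0:
  assumes "is_graph G"
  shows "sat G \<sigma> (leaves_at_0 \<phi>) \<longleftrightarrow> (\<exists>y1 y2 y3. distinct [\<sigma> 1, y1, y2, y3] \<and>
     adj G (\<sigma> 0) y1 \<and> adj G (\<sigma> 0) y2 \<and> adj G (\<sigma> 0) y3 \<and> sat G (\<sigma>(2 := y1, 3 := y2, 4 := y3)) \<phi>)"
  unfolding leaves_at_0_def Neq_def using is_graph_adj_verts[OF assms] by simp (smt (verit))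

lemma almost_sparkler_iff:
  assumes "is_graph G"
  shows "almost_sparkler G u p a b c y1 y2 y3 \<longleftrightarrow> adj G u p \<and> adj G p a \<and> adj G a b \<and> adj G b c \<and>
     a \<noteq> u \<and> b \<noteq> p \<and> b \<noteq> u \<and> c \<noteq> a \<and> c \<noteq> p \<and> c \<noteq> u \<and>
     distinct [p, y1, y2, y3] \<and> adj G u y1 \<and> adj G u y2 \<and> adj G u y3"
  using assms is_graph_irrefl[OF assms] unfolding almost_sparkler_def by auto

lemma models_sparkler_4_4_sentence_iff:
  assumes G: "is_graph G"
  shows "models G sparkler_4_4_sentence \<longleftrightarrow>
    (\<exists>u p a b c y1 y2 y3. almost_sparkler G u p a b c y1 y2 y3 \<and>
       (\<not> adj G u a \<or> \<not> exactly_one (adj G p y1) (adj G p y2) (adj G p y3)))"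
  unfolding almost_sparkler_iff[OF G] models_def sparkler_4_4_sentence_def exactly_one_adj_1_def
    exactly_one_def
  using is_graph_adj_verts[OF G] by (simp add: sat_path_from_1[OF G] sat_leaves_at_0[OF G]) blast

lemma models_sparkler_4_4_sentence_if_contains:
  assumes G: "is_graph G" and "contains_subgraph G (sparkler 4 4)"
  shows "models G sparkler_4_4_sentence"
proof -
  obtain c l1 l2 l3 q1 q2 q3 q4 where d: "distinct [c, l1, l2, l3, q1, q2, q3, q4]"
    and e: "adj G c l1" "adj G c l2" "adj G c l3" "adj G c q1" "adj G q1 q2" "adj G q2 q3" "adj G q3 q4"
    using assms unfolding contains_sparkler_4_4_iff[OF G] by blast
  have config: "almost_sparkler G c q1 q2 q3 q4 y1 y2 y3"
    if "distinct [q1, y1, y2, y3]" "adj G c y1" "adj G c y2" "adj G c y3" for y1 y2 y3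
    using that d e G unfolding almost_sparkler_def by auto
  consider "\<not> adj G c q2" | "\<not> adj G q1 l1" "\<not> adj G q1 l2" "\<not> adj G q1 l3"
    | l l' where "adj G c q2" "adj G q1 l" "distinct [q1, q2, l, l']" "adj G c l" "adj G c l'"
    using d e by (metis distinct_length_2_or_more distinct_singleton)
  moreover have "almost_sparkler G c q1 q2 q3 q4 l1 l2 l3" by (rule config) (use d e in auto)
  ultimately show ?thesis
  proof cases
    case 1
    then show ?thesis using \<open>almost_sparkler G c q1 q2 q3 q4 l1 l2 l3\<close>
      unfolding models_sparkler_4_4_sentence_iff[OF G] by blast
  next
    case 2
    then have "\<not> exactly_one (adj G q1 l1) (adj G q1 l2) (adj G q1 l3)" by (simp add: exactly_one_def)
    then show ?thesis using \<open>almost_sparkler G c q1 q2 q3 q4 l1 l2 l3\<close>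
      unfolding models_sparkler_4_4_sentence_iff[OF G] by blast
  next
    case (3 l l')
    then have "\<not> exactly_one (adj G q1 q2) (adj G q1 l) (adj G q1 l')" using e by (simp add: exactly_one_def)
    then show ?thesis using config[of q2 l l'] 3 unfolding models_sparkler_4_4_sentence_iff[OF G] by blast
  qed
qed

lemma defines_sparkler_4_4_at_depth_5: "defines_subgr_at_depth (sparkler 4 4) 5"
  unfolding defines_subgr_at_depth_def
proof (intro exI conjI allI impI)
  fix G assume "is_graph G \<and> connected_graph G \<and> Suc (7 ^ 3) \<le> card (verts G)"
  then have G: "is_graph G" and conn: "connected_graph G" and large: "7 ^ 3 < card (verts G)" by auto
  show "models G sparkler_4_4_sentence \<longleftrightarrow> contains_subgraph G (sparkler 4 4)"
  proof
    assume "models G sparkler_4_4_sentence"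
    then obtain u p a b c y1 y2 y3 where "almost_sparkler G u p a b c y1 y2 y3"
      and "\<not> adj G u a \<or> \<not> exactly_one (adj G p y1) (adj G p y2) (adj G p y3)"
      unfolding models_sparkler_4_4_sentence_iff[OF G] by blast
    then show "contains_subgraph G (sparkler 4 4)"
      using large_almost_sparkler.sparkler_4_4 conn large
      by (simp add: large_almost_sparkler_def large_almost_sparkler_axioms_def)
  qed (rule models_sparkler_4_4_sentence_if_contains[OF G])
qed (fact sentence_sparkler_4_4_sentence qdepth_sparkler_4_4_sentence)+

lemma Dv_sparkler_4_4: "Dv (sparkler 4 4) = 5"
  unfolding Dv_def
proof (rule Least_equality)
  show "defines_subgr_at_depth (sparkler 4 4) 5" by (rule defines_sparkler_4_4_at_depth_5)
  show "5 \<le> d" if "defines_subgr_at_depth (sparkler 4 4) d" for d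
    using that not_defines_sparkler_4_4_below_5[of d] by linarith
qed

theorem theorem2:
  shows "(\<exists>F. is_graph F \<and> connected_graph F \<and> Dv F + 3 \<le> card (verts F))
         \<and> Dv (sparkler 4 4) = 5"
  using Dv_sparkler_4_4 is_graph_sparkler[of 4 4] connected_sparkler[of 4 4] card_verts_sparkler[of 4 4]
  by auto

end
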